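(* Let $n_1,\dots,n_\ell$ be integers with $\prod_{i=1}^\ell n_i = n$, and let $A \in \{0,1\}^{n\times n}$ with $A \neq 0$. If there exist matrices $A_i \in \{0,1\}^{n_i\times n_i}$, $i=1,\dots,\ell$, with $A = A_1\otimes A_2\otimes\cdots\otimes A_\ell$, then these matrices are unique: if also $A = \hat A_1\otimes\cdots\otimes \hat A_\ell$ with $\hat A_i\in\{0,1\}^{n_i\times n_i}$, then $\hat A_i = A_i$ for all $i$.
   Context: Binary matrices have entries in $\{0,1\}$ and all arithmetic (in particular inside Kronecker products) uses Boolean addition ($1+1=1$) and multiplication. An $(n_1,\dots,n_\ell)$ factorization of $A$ is an expression $A=A_1\otimes\cdots\otimes A_\ell$ with $A_i\in\{0,1\}^{n_i\times n_i}$. *)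

theory Defs
  imports "Jordan_Normal_Form.Matrix"
begin

text \<open>Binary matrices are represented as matrices with Boolean entries (True = 1, False = 0).
  The Kronecker product uses Boolean multiplication (conjunction), with the standard
  0-indexed block convention: entry ((i,k),(j,l)) of A \<otimes> B is A(i,j) * B(k,l).\<close>

definition bkron :: "bool mat \<Rightarrow> bool mat \<Rightarrow> bool mat" where
  "bkron A B = mat (dim_row A * dim_row B) (dim_col A * dim_col B)
     (\<lambda>(i, j). A $$ (i div dim_row B, j div dim_col B) \<and> B $$ (i mod dim_row B, j mod dim_col B))"

definition bkron_list :: "bool mat list \<Rightarrow> bool mat" where
  "bkron_list As = foldr bkron As (mat 1 1 (\<lambda>_. True))"

definition nonzero_bmat :: "bool mat \<Rightarrow> bool" where
  "nonzero_bmat A \<longleftrightarrow> (\<exists>i j. i < dim_row A \<and> j < dim_col A \<and> A $$ (i, j))"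

end

theory Submission
  imports Defs
begin

text \<open>Entry ((i,k),(j,l)) of A \<otimes> B is A(i,j) \<and> B(k,l). So if A \<otimes> B = A' \<otimes> B' is nonzero,
  all four factors are nonzero, and fixing a nonzero entry of B and one of B' recovers A
  entrywise, and symmetrically B. Since A_1 \<otimes> \<dots> \<otimes> A_l = A_1 \<otimes> (A_2 \<otimes> \<dots> \<otimes> A_l),
  induction on l peels the factors off one at a time.\<close>

lemma bkron_carrier_mat:
  "A \<in> carrier_mat a c \<Longrightarrow> B \<in> carrier_mat b d \<Longrightarrow> bkron A B \<in> carrier_mat (a * b) (c * d)"
  by (simp add: bkron_def)

lemma mult_add_less_mult:
  fixes i k a b :: nat
  assumes "i < a" "k < b"
  shows "i * b + k < a * b"
proof -
  have "i * b + k < Suc i * b" using assms(2) by simp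
  also have "\<dots> \<le> a * b" using assms(1) by (intro mult_le_mono1) simp
  finally show ?thesis .
qed

lemma bkron_index:
  assumes "A \<in> carrier_mat a c" "B \<in> carrier_mat b d"
    and "i < a" "j < c" "k < b" "l < d"
  shows "bkron A B $$ (i * b + k, j * d + l) \<longleftrightarrow> A $$ (i, j) \<and> B $$ (k, l)"
  using assms mult_add_less_mult[of i a k b] mult_add_less_mult[of j c l d]
  by (simp add: bkron_def)

lemma nonzero_bmat_bkron_iff:
  assumes "A \<in> carrier_mat a c" "B \<in> carrier_mat b d"
  shows "nonzero_bmat (bkron A B) \<longleftrightarrow> nonzero_bmat A \<and> nonzero_bmat B"
proof
  assume "nonzero_bmat (bkron A B)"
  then obtain p q where pq: "p < a * b" "q < c * d" "bkron A B $$ (p, q)"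
    using assms by (auto simp: nonzero_bmat_def bkron_def)
  then have "b > 0" "d > 0" by (auto intro: gr0I)
  with pq have "p div b < a" "q div d < c" "p mod b < b" "q mod d < d"
    by (auto simp: less_mult_imp_div_less)
  moreover have "A $$ (p div b, q div d) \<and> B $$ (p mod b, q mod d)"
    using pq assms by (simp add: bkron_def)
  ultimately show "nonzero_bmat A \<and> nonzero_bmat B"
    using assms by (auto simp: nonzero_bmat_def)
next
  assume "nonzero_bmat A \<and> nonzero_bmat B"
  then obtain i j k l where "i < a" "j < c" "A $$ (i, j)" "k < b" "l < d" "B $$ (k, l)"
    using assms by (auto simp: nonzero_bmat_def)
  then have "bkron A B $$ (i * b + k, j * d + l)"
    using bkron_index[OF assms] by simp
  moreover have "i * b + k < dim_row (bkron A B)" "j * d + l < dim_col (bkron A B)"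
    using \<open>i < a\<close> \<open>k < b\<close> \<open>j < c\<close> \<open>l < d\<close> assms
    by (simp_all add: bkron_def mult_add_less_mult)
  ultimately show "nonzero_bmat (bkron A B)"
    unfolding nonzero_bmat_def by blast
qed

lemma bkron_cancel:
  assumes A: "A \<in> carrier_mat a c" and A': "A' \<in> carrier_mat a c"
    and B: "B \<in> carrier_mat b d" and B': "B' \<in> carrier_mat b d"
    and eq: "bkron A B = bkron A' B'" and nz: "nonzero_bmat (bkron A B)"
  shows "A = A'" and "B = B'"
proof -
  have "nonzero_bmat (bkron A' B')" using nz eq by simp
  then obtain i' j' k' l'
    where nz': "i' < a" "j' < c" "A' $$ (i', j')" "k' < b" "l' < d" "B' $$ (k', l')"
    using nonzero_bmat_bkron_iff[OF A' B'] A' B' by (auto simp: nonzero_bmat_def)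
  obtain i j k l where nz: "i < a" "j < c" "A $$ (i, j)" "k < b" "l < d" "B $$ (k, l)"
    using nz nonzero_bmat_bkron_iff[OF A B] A B by (auto simp: nonzero_bmat_def)
  have entries: "(A $$ (i, j) \<and> B $$ (k, l)) \<longleftrightarrow> (A' $$ (i, j) \<and> B' $$ (k, l))"
    if "i < a" "j < c" "k < b" "l < d" for i j k l
    using bkron_index[OF A B that] bkron_index[OF A' B' that] eq by simp
  have "A $$ (i, j) = A' $$ (i, j)" if "i < a" "j < c" for i j
    using entries[OF that nz(4,5)] entries[OF that nz'(4,5)] nz nz' by blast
  then show "A = A'" using A A' by (intro eq_matI) auto
  have "B $$ (k, l) = B' $$ (k, l)" if "k < b" "l < d" for k l
    using entries[OF nz(1,2) that] entries[OF nz'(1,2) that] nz nz' by blast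
  then show "B = B'" using B B' by (intro eq_matI) auto
qed

lemma bkron_list_Cons [simp]: "bkron_list (A # As) = bkron A (bkron_list As)"
  by (simp add: bkron_list_def)

lemma bkron_list_carrier_mat:
  "list_all2 (\<lambda>A k. A \<in> carrier_mat k k) As ns
   \<Longrightarrow> bkron_list As \<in> carrier_mat (prod_list ns) (prod_list ns)"
  by (induction rule: list_all2_induct) (simp_all add: bkron_list_def bkron_carrier_mat)

lemma bkron_list_cancel:
  assumes "list_all2 (\<lambda>A k. A \<in> carrier_mat k k) As ns"
    and "list_all2 (\<lambda>B k. B \<in> carrier_mat k k) Bs ns"
    and "bkron_list As = bkron_list Bs" and "nonzero_bmat (bkron_list As)"
  shows "As = Bs"
  using assms
proof (induction As ns arbitrary: Bs rule: list_all2_induct)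
  case Nil
  then show ?case by (simp add: list_all2_Nil2)
next
  case (Cons A As m ns)
  obtain B Bs' where Bs: "Bs = B # Bs'" and B: "B \<in> carrier_mat m m"
    and Bs': "list_all2 (\<lambda>B k. B \<in> carrier_mat k k) Bs' ns"
    using Cons.prems(1) by (auto simp: list_all2_Cons2)
  note tails = bkron_list_carrier_mat[OF Cons.hyps(2)] bkron_list_carrier_mat[OF Bs']
  have eq: "bkron A (bkron_list As) = bkron B (bkron_list Bs')"
    and nz: "nonzero_bmat (bkron A (bkron_list As))"
    using Cons.prems(2,3) Bs by simp_all
  have "A = B" and tails_eq: "bkron_list As = bkron_list Bs'"
    using bkron_cancel[OF Cons.hyps(1) B tails eq nz] by simp_all
  moreover have "nonzero_bmat (bkron_list As)"
    using nz nonzero_bmat_bkron_iff[OF Cons.hyps(1) tails(1)] by simp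
  then have "As = Bs'" using Cons.IH[OF Bs' tails_eq] by simp
  ultimately show ?case using Bs by simp
qed

theorem lemma1:
  fixes ns :: "nat list" and n :: nat and A :: "bool mat" and As Bs :: "bool mat list"
  assumes "prod_list ns = n"
    and "A \<in> carrier_mat n n"
    and "nonzero_bmat A"
    and "length As = length ns"
    and "\<forall>i < length ns. As ! i \<in> carrier_mat (ns ! i) (ns ! i)"
    and "A = bkron_list As"
    and "length Bs = length ns"
    and "\<forall>i < length ns. Bs ! i \<in> carrier_mat (ns ! i) (ns ! i)"
    and "A = bkron_list Bs"
  shows "\<forall>i < length ns. Bs ! i = As ! i"
proof -
  have "list_all2 (\<lambda>A k. A \<in> carrier_mat k k) As ns"
    and "list_all2 (\<lambda>B k. B \<in> carrier_mat k k) Bs ns"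
    using assms(4,5,7,8) by (simp_all add: list_all2_conv_all_nth)
  moreover have "bkron_list As = bkron_list Bs" and "nonzero_bmat (bkron_list As)"
    using assms(3,6,9) by blast+
  ultimately have "As = Bs" by (rule bkron_list_cancel)
  then show ?thesis by simp
qed

end
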